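(* Let $s\ge 2$ and let $R,r,h$ be positive integers with $R\le r$, and assume $\mathrm{Perf}(s,r,R)\neq\emptyset$. Identify $\mathbb F_q^{s\times(r+h)}$ with $\mathbb F_q^{s\times r}\times\mathbb F_q^{s\times h}$, writing $x=(x',x'')$ (the first $r$ columns and the last $h$ columns). For any function $f:\mathbb F_q^{s\times h}\to\mathrm{Perf}(s,r,R)$, the code $C_f=\{(c',c''): c''\in\mathbb F_q^{s\times h},\ c'\in f(c'')\}$ belongs to $\mathrm{Perf}(s,r+h,R)$. Conversely, every $C\in\mathrm{Perf}(s,r+h,R)$ is of the form $C_f$ for some function $f:\mathbb F_q^{s\times h}\to\mathrm{Perf}(s,r,R)$ (namely $f(c'')=\{c'\in\mathbb F_q^{s\times r}:(c',c'')\in C\}$).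
   Context: $q$ is a prime power, $\mathbb F_q^{s\times n}$ the set of $s\times n$ matrices over $\mathbb F_q$ with rows in $\mathbb F_q^{1\times n}$. For a row $y=(y_1,\dots,y_n)$, the NRT weight is $w(y)=\max\{j: y_j\neq 0\}$ if $y\ne0$ and $w(0)=0$; for a matrix, $w(x)=\sum_i w(x_i)$. The NRT metric is $d(x,y)=w(x-y)$; $B(c,R)=\{x: d(x,c)\le R\}$. A code $C\subseteq\mathbb F_q^{s\times n}$ is $R$-perfect if the balls $B(c,R)$, $c\in C$, are pairwise disjoint and cover $\mathbb F_q^{s\times n}$; non-trivial means $|C|>1$ and $C\ne\mathbb F_q^{s\times n}$. $\mathrm{Perf}(s,n,R)$ denotes the set of non-trivial $R$-perfect codes in $\mathbb F_q^{s\times n}$. *)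

theory Defs
  imports Main
begin

text \<open>The field F_q is modelled by a type variable of class {finite, field}
(every finite field is some F_q, q a prime power). An s x n matrix is a function
nat => nat => 'a (row index i < s, column index j < n, 0-based; column j is
column j+1 of the paper) which vanishes outside {0..<s} x {0..<n}.\<close>

definition mat_space :: "nat \<Rightarrow> nat \<Rightarrow> (nat \<Rightarrow> nat \<Rightarrow> 'a::zero) set" where
  "mat_space s n = {x. \<forall>i j. (s \<le> i \<or> n \<le> j) \<longrightarrow> x i j = 0}"

definition row_weight :: "nat \<Rightarrow> (nat \<Rightarrow> 'a::zero) \<Rightarrow> nat" where
  "row_weight n y = (if \<exists>j<n. y j \<noteq> 0 then Suc (Max {j. j < n \<and> y j \<noteq> 0}) else 0)"

definition nrt_weight :: "nat \<Rightarrow> nat \<Rightarrow> (nat \<Rightarrow> nat \<Rightarrow> 'a::zero) \<Rightarrow> nat" where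
  "nrt_weight s n x = (\<Sum>i<s. row_weight n (x i))"

definition nrt_dist :: "nat \<Rightarrow> nat \<Rightarrow> (nat \<Rightarrow> nat \<Rightarrow> 'a::ab_group_add) \<Rightarrow> (nat \<Rightarrow> nat \<Rightarrow> 'a) \<Rightarrow> nat" where
  "nrt_dist s n x y = nrt_weight s n (\<lambda>i j. x i j - y i j)"

definition nrt_ball :: "nat \<Rightarrow> nat \<Rightarrow> (nat \<Rightarrow> nat \<Rightarrow> 'a::ab_group_add) \<Rightarrow> nat \<Rightarrow> (nat \<Rightarrow> nat \<Rightarrow> 'a) set" where
  "nrt_ball s n c R = {x \<in> mat_space s n. nrt_dist s n x c \<le> R}"

definition perfect_code :: "nat \<Rightarrow> nat \<Rightarrow> nat \<Rightarrow> (nat \<Rightarrow> nat \<Rightarrow> 'a::ab_group_add) set \<Rightarrow> bool" where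
  "perfect_code s n R C \<longleftrightarrow> C \<subseteq> mat_space s n \<and>
     (\<forall>c\<in>C. \<forall>c'\<in>C. c \<noteq> c' \<longrightarrow> nrt_ball s n c R \<inter> nrt_ball s n c' R = {}) \<and>
     (\<Union>c\<in>C. nrt_ball s n c R) = mat_space s n"

definition Perf :: "nat \<Rightarrow> nat \<Rightarrow> nat \<Rightarrow> (nat \<Rightarrow> nat \<Rightarrow> 'a::{finite,field}) set set" where
  "Perf s n R = {C. perfect_code s n R C \<and> 1 < card C \<and> C \<noteq> mat_space s n}"

definition mat_join :: "nat \<Rightarrow> (nat \<Rightarrow> nat \<Rightarrow> 'a) \<Rightarrow> (nat \<Rightarrow> nat \<Rightarrow> 'a) \<Rightarrow> (nat \<Rightarrow> nat \<Rightarrow> 'a)" where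
  "mat_join r c' c'' = (\<lambda>i j. if j < r then c' i j else c'' i (j - r))"

definition code_Cf :: "nat \<Rightarrow> nat \<Rightarrow> nat \<Rightarrow> ((nat \<Rightarrow> nat \<Rightarrow> 'a::zero) \<Rightarrow> (nat \<Rightarrow> nat \<Rightarrow> 'a) set) \<Rightarrow> (nat \<Rightarrow> nat \<Rightarrow> 'a) set" where
  "code_Cf s r h f = {mat_join r c' c'' | c' c''. c'' \<in> mat_space s h \<and> c' \<in> f c''}"

end

theory Submission imports Defs begin

text \<open>Since the NRT weight of a row counts the position of its last nonzero entry, a matrix
whose last h columns are not all zero has weight greater than r. Hence, for R \<le> r, a point
(x', x'') is within distance R of (c', c'') only if x'' = c'', and then the distance is
d(x', c'). An R-perfect code in F_q^{s x (r+h)} is thus exactly a family, indexed by the tail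
c'', of R-perfect codes in F_q^{s x r}. Non-triviality comes for free: with s \<ge> 2 and
0 < R \<le> r no single ball is the whole space and no ball is a single point.\<close>

lemma finite_mat_space: "finite (mat_space s n :: (nat \<Rightarrow> nat \<Rightarrow> 'a::{finite,zero}) set)"
proof -
  let ?G = "{g :: nat \<times> nat \<Rightarrow> 'a. \<forall>p. (p \<in> {..<s} \<times> {..<n} \<longrightarrow> g p \<in> UNIV) \<and>
                                           (p \<notin> {..<s} \<times> {..<n} \<longrightarrow> g p = 0)}"
  have "finite ?G" by (rule finite_set_of_finite_funs) auto
  moreover have "mat_space s n \<subseteq> curry ` ?G"
  proof
    fix x :: "nat \<Rightarrow> nat \<Rightarrow> 'a" assume "x \<in> mat_space s n"
    then have "case_prod x \<in> ?G" by (auto simp: mat_space_def)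
    then show "x \<in> curry ` ?G" by (rule image_eqI[rotated]) simp
  qed
  ultimately show ?thesis by (blast intro: finite_subset finite_imageI)
qed

lemma mat_join_in_mat_space:
  "a \<in> mat_space s r \<Longrightarrow> b \<in> mat_space s h \<Longrightarrow> mat_join r a b \<in> mat_space s (r + h)"
  unfolding mat_space_def mat_join_def by (auto simp: not_less)

lemma mat_space_add_cases:
  assumes "x \<in> mat_space s (r + h)"
  obtains a b where "a \<in> mat_space s r" "b \<in> mat_space s h" "x = mat_join r a b"
proof
  show "(\<lambda>i j. if j < r then x i j else 0) \<in> mat_space s r"
    "(\<lambda>i j. x i (j + r)) \<in> mat_space s h"
    using assms by (auto simp: mat_space_def)
  show "x = mat_join r (\<lambda>i j. if j < r then x i j else 0) (\<lambda>i j. x i (j + r))"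
    by (intro ext) (simp add: mat_join_def)
qed

lemma mat_join_eq_iff:
  assumes "a \<in> mat_space s r" "a' \<in> mat_space s r"
  shows "mat_join r a b = mat_join r a' b' \<longleftrightarrow> a = a' \<and> b = b'"
proof
  assume eq: "mat_join r a b = mat_join r a' b'"
  have "a i j = a' i j" for i j
  proof (cases "j < r")
    case True
    then show ?thesis using fun_cong[OF fun_cong[OF eq, of i], of j] by (simp add: mat_join_def)
  next
    case False
    then show ?thesis using assms by (simp add: mat_space_def)
  qed
  moreover have "b i j = b' i j" for i j
    using fun_cong[OF fun_cong[OF eq, of i], of "j + r"] by (simp add: mat_join_def)
  ultimately show "a = a' \<and> b = b'" by blast
qed simp

lemma mat_space_eqI:
  assumes "b \<in> mat_space s h" "b' \<in> mat_space s h" "\<And>i j. i < s \<Longrightarrow> j < h \<Longrightarrow> b i j = b' i j"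
  shows "b = b'"
proof (intro ext)
  fix i j
  show "b i j = b' i j"
    using assms by (cases "i < s \<and> j < h") (auto simp: mat_space_def)
qed

lemma row_weight_ge: "j < n \<Longrightarrow> y j \<noteq> 0 \<Longrightarrow> Suc j \<le> row_weight n y"
  unfolding row_weight_def by (auto intro!: Max_ge)

lemma row_weight_le: "(\<And>j. j < n \<Longrightarrow> y j \<noteq> 0 \<Longrightarrow> Suc j \<le> k) \<Longrightarrow> row_weight n y \<le> k"
  unfolding row_weight_def by (auto simp: Max_less_iff Suc_le_eq)

lemma row_weight_le_nrt_weight: "i < s \<Longrightarrow> row_weight n (x i) \<le> nrt_weight s n x"
  unfolding nrt_weight_def by (rule member_le_sum) auto

lemma nrt_dist_self [simp]: "nrt_dist s n x x = 0"
  by (simp add: nrt_dist_def nrt_weight_def row_weight_def)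

lemma row_weight_append_zeros:
  "row_weight (r + h) (\<lambda>j. if j < r then y j else 0) = row_weight r y"
proof -
  have "{j. j < r + h \<and> (if j < r then y j else 0) \<noteq> 0} = {j. j < r \<and> y j \<noteq> 0}"
    by auto
  moreover from this have "(\<exists>j<r + h. (if j < r then y j else 0) \<noteq> 0) \<longleftrightarrow> (\<exists>j<r. y j \<noteq> 0)"
    by blast
  ultimately show ?thesis by (simp add: row_weight_def)
qed

lemma nrt_dist_mat_join_same_tail:
  "nrt_dist s (r + h) (mat_join r a b) (mat_join r a' b) = nrt_dist s r a a'"
proof -
  have "(\<lambda>i j. mat_join r a b i j - mat_join r a' b i j) = (\<lambda>i j. if j < r then a i j - a' i j else 0)"
    by (intro ext) (simp add: mat_join_def)
  then show ?thesis
    by (simp add: nrt_dist_def nrt_weight_def row_weight_append_zeros)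
qed

lemma nrt_dist_mat_join_different_tail:
  assumes "i < s" "j < h" "b i j \<noteq> b' i j"
  shows "r < nrt_dist s (r + h) (mat_join r a b) (mat_join r a' b')"
proof -
  let ?d = "\<lambda>i j. mat_join r a b i j - mat_join r a' b' i j"
  have "Suc (r + j) \<le> row_weight (r + h) (?d i)"
    by (rule row_weight_ge) (use assms in \<open>auto simp: mat_join_def\<close>)
  also have "\<dots> \<le> nrt_dist s (r + h) (mat_join r a b) (mat_join r a' b')"
    unfolding nrt_dist_def by (rule row_weight_le_nrt_weight) (fact \<open>i < s\<close>)
  finally show ?thesis by simp
qed

lemma nrt_dist_mat_join_le_iff:
  assumes "R \<le> r" "b \<in> mat_space s h" "b' \<in> mat_space s h"
  shows "nrt_dist s (r + h) (mat_join r a b) (mat_join r a' b') \<le> R \<longleftrightarrow>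
         b' = b \<and> nrt_dist s r a a' \<le> R"
proof (cases "b' = b")
  case False
  then obtain i j where "i < s" "j < h" "b i j \<noteq> b' i j"
    using mat_space_eqI[OF assms(2,3)] by metis
  then show ?thesis
    using nrt_dist_mat_join_different_tail[of i s j h b b' r a a'] assms(1) False by simp
qed (simp add: nrt_dist_mat_join_same_tail)

lemma perfect_code_iff_unique:
  "perfect_code s n R C \<longleftrightarrow>
     C \<subseteq> mat_space s n \<and> (\<forall>x\<in>mat_space s n. \<exists>!c\<in>C. nrt_dist s n x c \<le> R)"
  unfolding perfect_code_def nrt_ball_def by (auto 0 4)

lemma perfect_code_code_Cf:
  fixes f :: "(nat \<Rightarrow> nat \<Rightarrow> 'a::ab_group_add) \<Rightarrow> (nat \<Rightarrow> nat \<Rightarrow> 'a) set"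
  assumes "R \<le> r" and perfect: "\<And>b. b \<in> mat_space s h \<Longrightarrow> perfect_code s r R (f b)"
  shows "perfect_code s (r + h) R (code_Cf s r h f)"
  unfolding perfect_code_iff_unique
proof (intro conjI ballI)
  have sub: "f b \<subseteq> mat_space s r" if "b \<in> mat_space s h" for b
    using perfect[OF that] by (simp add: perfect_code_def)
  then show "code_Cf s r h f \<subseteq> mat_space s (r + h)"
    unfolding code_Cf_def by (blast intro: mat_join_in_mat_space)
  fix x :: "nat \<Rightarrow> nat \<Rightarrow> 'a" assume "x \<in> mat_space s (r + h)"
  then obtain a b where "a \<in> mat_space s r" and b: "b \<in> mat_space s h"
    and x: "x = mat_join r a b" by (rule mat_space_add_cases)
  then obtain a' where a': "a' \<in> f b" "nrt_dist s r a a' \<le> R"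
    and uniq: "\<And>a''. a'' \<in> f b \<Longrightarrow> nrt_dist s r a a'' \<le> R \<Longrightarrow> a'' = a'"
    using perfect[OF b] unfolding perfect_code_iff_unique by metis
  show "\<exists>!c\<in>code_Cf s r h f. nrt_dist s (r + h) x c \<le> R"
  proof (rule ex1I)
    show "mat_join r a' b \<in> code_Cf s r h f \<and> nrt_dist s (r + h) x (mat_join r a' b) \<le> R"
      using a' b by (auto simp: code_Cf_def x nrt_dist_mat_join_same_tail)
  next
    fix c assume "c \<in> code_Cf s r h f \<and> nrt_dist s (r + h) x c \<le> R"
    then obtain a'' b'' where c: "c = mat_join r a'' b''" "b'' \<in> mat_space s h" "a'' \<in> f b''"
      and "nrt_dist s (r + h) x c \<le> R" unfolding code_Cf_def by blast
    then have "b'' = b" "nrt_dist s r a a'' \<le> R"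
      using nrt_dist_mat_join_le_iff[OF \<open>R \<le> r\<close> b] x by auto
    then show "c = mat_join r a' b" using c uniq by simp
  qed
qed

lemma perfect_code_slice:
  fixes C :: "(nat \<Rightarrow> nat \<Rightarrow> 'a::ab_group_add) set"
  assumes "R \<le> r" "perfect_code s (r + h) R C" and b: "b \<in> mat_space s h"
  shows "perfect_code s r R {a \<in> mat_space s r. mat_join r a b \<in> C}"
  unfolding perfect_code_iff_unique
proof (intro conjI ballI)
  have sub: "C \<subseteq> mat_space s (r + h)"
    and uniq: "\<And>x. x \<in> mat_space s (r + h) \<Longrightarrow> \<exists>!c\<in>C. nrt_dist s (r + h) x c \<le> R"
    using assms(2) unfolding perfect_code_iff_unique by blast+
  show "{a \<in> mat_space s r. mat_join r a b \<in> C} \<subseteq> mat_space s r" by blast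
  fix x :: "nat \<Rightarrow> nat \<Rightarrow> 'a" assume x: "x \<in> mat_space s r"
  obtain c where c: "c \<in> C" "nrt_dist s (r + h) (mat_join r x b) c \<le> R"
    and c_uniq: "\<And>c'. c' \<in> C \<Longrightarrow> nrt_dist s (r + h) (mat_join r x b) c' \<le> R \<Longrightarrow> c' = c"
    using uniq[OF mat_join_in_mat_space[OF x b]] by metis
  obtain a b' where a: "a \<in> mat_space s r" "b' \<in> mat_space s h" and ca: "c = mat_join r a b'"
    using sub c(1) by (blast elim: mat_space_add_cases)
  then have "b' = b" "nrt_dist s r x a \<le> R"
    using c(2) nrt_dist_mat_join_le_iff[OF \<open>R \<le> r\<close> b] by auto
  show "\<exists>!a\<in>{a \<in> mat_space s r. mat_join r a b \<in> C}. nrt_dist s r x a \<le> R"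
  proof (rule ex1I)
    show "a \<in> {a \<in> mat_space s r. mat_join r a b \<in> C} \<and> nrt_dist s r x a \<le> R"
      using a c(1) ca \<open>b' = b\<close> \<open>nrt_dist s r x a \<le> R\<close> by simp
  next
    fix a'' assume "a'' \<in> {a \<in> mat_space s r. mat_join r a b \<in> C} \<and> nrt_dist s r x a'' \<le> R"
    then have "mat_join r a'' b = c" "a'' \<in> mat_space s r"
      using c_uniq by (auto simp: nrt_dist_mat_join_same_tail)
    then show "a'' = a" using ca \<open>b' = b\<close> mat_join_eq_iff a by blast
  qed
qed

lemma code_Cf_slices:
  assumes "C \<subseteq> mat_space s (r + h)"
  shows "C = code_Cf s r h (\<lambda>b. {a \<in> mat_space s r. mat_join r a b \<in> C})"
  using assms unfolding code_Cf_def by (blast elim: mat_space_add_cases)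

lemma perfect_code_card_gt_1:
  fixes C :: "(nat \<Rightarrow> nat \<Rightarrow> 'a::{finite,field}) set"
  assumes perfect: "perfect_code s n R C" and "2 \<le> s" "0 < R" "R \<le> n"
  shows "1 < card C"
proof -
  have sub: "C \<subseteq> mat_space s n"
    and uniq: "\<And>x. x \<in> mat_space s n \<Longrightarrow> \<exists>!c\<in>C. nrt_dist s n x c \<le> R"
    using perfect unfolding perfect_code_iff_unique by blast+
  obtain a where a: "a \<in> C" using uniq[of "\<lambda>i j. 0"] by (auto simp: mat_space_def)
  define x where "x = (\<lambda>i j. if i < s \<and> j < n then a i j + 1 else (0::'a))"
  have x: "x \<in> mat_space s n" by (simp add: x_def mat_space_def)
  have "Suc (n - 1) \<le> row_weight n (\<lambda>j. x i j - a i j)" if "i < s" for i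
    by (rule row_weight_ge) (use that assms(3,4) in \<open>auto simp: x_def\<close>)
  then have "s * n \<le> nrt_dist s n x a"
    unfolding nrt_dist_def nrt_weight_def using sum_bounded_below[of "{..<s}" n] assms(3,4) by simp
  moreover have "R < s * n"
  proof -
    have "R < 2 * n" using assms(3,4) by simp
    also have "\<dots> \<le> s * n" using assms(2) by simp
    finally show ?thesis .
  qed
  ultimately obtain b where "b \<in> C" "b \<noteq> a" using uniq[OF x] by force
  then have "card {a, b} \<le> card C"
    using a sub finite_mat_space by (intro card_mono) (auto intro: finite_subset)
  then show ?thesis using \<open>b \<noteq> a\<close> by simp
qed

lemma perfect_code_neq_mat_space:
  fixes C :: "(nat \<Rightarrow> nat \<Rightarrow> 'a::{finite,field}) set"
  assumes perfect: "perfect_code s n R C" and "0 < s" "0 < R" "R \<le> n"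
  shows "C \<noteq> mat_space s n"
proof
  assume C: "C = mat_space s n"
  define e :: "nat \<Rightarrow> nat \<Rightarrow> 'a" where "e = (\<lambda>i j. if i = 0 \<and> j = 0 then 1 else 0)"
  have "e \<in> C" "(\<lambda>i j. 0) \<in> C" using assms unfolding C e_def mat_space_def by auto
  moreover have "e \<noteq> (\<lambda>i j. 0)" by (metis e_def one_neq_zero)
  moreover have "row_weight n (\<lambda>j. 0 - e i j) \<le> (if i = 0 then 1 else 0)" for i
    by (rule row_weight_le) (auto simp: e_def split: if_splits)
  then have "nrt_dist s n (\<lambda>i j. 0) e \<le> (\<Sum>i<s. if i = 0 then 1 else 0)"
    unfolding nrt_dist_def nrt_weight_def by (intro sum_mono)
  then have "nrt_dist s n (\<lambda>i j. 0) e \<le> R" using \<open>0 < s\<close> \<open>0 < R\<close> by simp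
  moreover have "\<exists>!c\<in>C. nrt_dist s n (\<lambda>i j. 0) c \<le> R"
    using perfect \<open>(\<lambda>i j. 0) \<in> C\<close> unfolding perfect_code_iff_unique C by blast
  ultimately show False by (metis le0 nrt_dist_self)
qed

lemma perfect_code_in_Perf:
  fixes C :: "(nat \<Rightarrow> nat \<Rightarrow> 'a::{finite,field}) set"
  assumes "perfect_code s n R C" "2 \<le> s" "0 < R" "R \<le> n"
  shows "C \<in> Perf s n R"
  using assms perfect_code_card_gt_1 perfect_code_neq_mat_space unfolding Perf_def by fastforce

theorem mainTheorem11:
  fixes s r h R :: nat
  assumes "2 \<le> s" and "0 < R" and "R \<le> r" and "0 < h"
    and "Perf s r R \<noteq> ({} :: (nat \<Rightarrow> nat \<Rightarrow> 'a::{finite,field}) set set)"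
  shows "(\<forall>f :: (nat \<Rightarrow> nat \<Rightarrow> 'a) \<Rightarrow> (nat \<Rightarrow> nat \<Rightarrow> 'a) set.
            (\<forall>c''\<in>mat_space s h. f c'' \<in> Perf s r R) \<longrightarrow> code_Cf s r h f \<in> Perf s (r + h) R)
       \<and> (\<forall>C\<in>(Perf s (r + h) R :: (nat \<Rightarrow> nat \<Rightarrow> 'a) set set).
            let f = (\<lambda>c''. {c' \<in> mat_space s r. mat_join r c' c'' \<in> C}) in
            (\<forall>c''\<in>mat_space s h. f c'' \<in> Perf s r R) \<and> C = code_Cf s r h f)"
proof (intro conjI allI impI ballI)
  fix f :: "(nat \<Rightarrow> nat \<Rightarrow> 'a) \<Rightarrow> (nat \<Rightarrow> nat \<Rightarrow> 'a) set"
  assume "\<forall>c''\<in>mat_space s h. f c'' \<in> Perf s r R"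
  then have "perfect_code s (r + h) R (code_Cf s r h f)"
    using \<open>R \<le> r\<close> by (intro perfect_code_code_Cf) (auto simp: Perf_def)
  then show "code_Cf s r h f \<in> Perf s (r + h) R"
    using assms(1-3) by (intro perfect_code_in_Perf) auto
next
  fix C :: "(nat \<Rightarrow> nat \<Rightarrow> 'a) set"
  assume "C \<in> Perf s (r + h) R"
  then have C: "perfect_code s (r + h) R C" by (simp add: Perf_def)
  have "{c' \<in> mat_space s r. mat_join r c' c'' \<in> C} \<in> Perf s r R" if "c'' \<in> mat_space s h" for c''
    using perfect_code_slice[OF \<open>R \<le> r\<close> C that] assms(1-3) by (rule perfect_code_in_Perf)
  moreover have "C = code_Cf s r h (\<lambda>c''. {c' \<in> mat_space s r. mat_join r c' c'' \<in> C})"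
    using C by (intro code_Cf_slices) (simp add: perfect_code_def)
  ultimately show "let f = (\<lambda>c''. {c' \<in> mat_space s r. mat_join r c' c'' \<in> C}) in
            (\<forall>c''\<in>mat_space s h. f c'' \<in> Perf s r R) \<and> C = code_Cf s r h f"
    by (simp add: Let_def)
qed

end
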